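(* Let $2\le m\le n\le\ell<(m-1)(n-1)+1$. Then every typical rank of real $m\times n\times\ell$ tensors is at least $\ell+1$.
   Context: An integer $r>0$ is a typical rank for the format $m\times n\times\ell$ if $\Pr\{\mathrm{rank}(T)=r\}>0$ for a tensor $T\in\mathbb R^{m\times n\times\ell}$ with i.i.d. standard Gaussian entries; rank is the minimal number of rank-one tensors $a\otimes b\otimes c$ summing to $T$. *)

theory Defs
  imports "HOL-Probability.Probability"
begin

text \<open>Real m x n x l tensors are functions on index triples; only the entries
  with indices in {..<m} x {..<n} x {..<l} matter.\<close>

definition tensor_rank :: "nat \<Rightarrow> nat \<Rightarrow> nat \<Rightarrow> (nat \<times> nat \<times> nat \<Rightarrow> real) \<Rightarrow> nat" where
  "tensor_rank m n l T =
     (LEAST r. \<exists>(a::nat \<Rightarrow> nat \<Rightarrow> real) (b::nat \<Rightarrow> nat \<Rightarrow> real) (c::nat \<Rightarrow> nat \<Rightarrow> real).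
        \<forall>i<m. \<forall>j<n. \<forall>k<l. T (i, j, k) = (\<Sum>s<r. a s i * b s j * c s k))"

definition gaussian_tensor_measure :: "nat \<Rightarrow> nat \<Rightarrow> nat \<Rightarrow> (nat \<times> nat \<times> nat \<Rightarrow> real) measure" where
  "gaussian_tensor_measure m n l =
     PiM ({..<m} \<times> {..<n} \<times> {..<l}) (\<lambda>_. density lborel std_normal_density)"

definition typical_rank :: "nat \<Rightarrow> nat \<Rightarrow> nat \<Rightarrow> nat \<Rightarrow> bool" where
  "typical_rank m n l r \<longleftrightarrow> r > 0 \<and>
     measure (gaussian_tensor_measure m n l)
       {T \<in> space (gaussian_tensor_measure m n l). tensor_rank m n l T = r} > 0"

end

theory Submission
  imports Defs
begin

text \<open>A tensor of rank at most \<open>l\<close> is a sum \<open>\<Sum>s<l. a\<^sub>s \<otimes> b\<^sub>s \<otimes> c\<^sub>s\<close> in which every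
  \<open>a\<^sub>s\<close> and \<open>b\<^sub>s\<close> may be rescaled to have largest entry \<open>1\<close>, so these tensors are described by
  \<open>p = l((m-1)+(n-1)+l)\<close> real parameters, fewer than the \<open>mnl\<close> entries when
  \<open>l < (m-1)(n-1)+1\<close>. Bounding the \<open>c\<^sub>s\<close> by \<open>R\<close> and rounding all parameters to the grid
  \<open>\<int>/k\<close> covers these tensors by \<open>O(k\<^sup>p)\<close> cubes of side \<open>O(1/k)\<close>, whose total Gaussian
  measure is \<open>O(1/k)\<close> since the standard normal density is at most \<open>1\<close>. Taking the union over
  \<open>R\<close>, almost every Gaussian tensor has rank greater than \<open>l\<close>.\<close>

abbreviation std_normal :: "real measure" where
  "std_normal \<equiv> density lborel std_normal_density"

definition cube :: "'i set \<Rightarrow> ('i \<Rightarrow> real) \<Rightarrow> real \<Rightarrow> ('i \<Rightarrow> real) set" where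
  "cube I t d = (\<Pi>\<^sub>E x\<in>I. {t x - d .. t x + d})"

lemma std_normal_density_le_1: "std_normal_density x \<le> 1"
proof -
  have "exp (- x\<^sup>2 / 2) \<le> 1" by simp
  also have "1 \<le> sqrt (2 * pi)" using pi_gt3 by (simp add: real_le_rsqrt)
  finally show ?thesis unfolding std_normal_density_def by (simp add: divide_le_eq)
qed

lemma emeasure_std_normal_interval_le:
  assumes "a \<le> b"
  shows "emeasure std_normal {a..b} \<le> ennreal (b - a)"
proof -
  have "emeasure std_normal {a..b} = (\<integral>\<^sup>+ x. ennreal (std_normal_density x) * indicator {a..b} x \<partial>lborel)"
    by (simp add: emeasure_density)
  also have "\<dots> \<le> (\<integral>\<^sup>+ x. indicator {a..b} x \<partial>lborel)"
    by (intro nn_integral_mono) (auto simp: indicator_def std_normal_density_le_1)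
  also have "\<dots> = ennreal (b - a)" using assms by simp
  finally show ?thesis .
qed

lemma sets_cube: "finite I \<Longrightarrow> cube I t d \<in> sets (\<Pi>\<^sub>M i\<in>I. std_normal)"
  unfolding cube_def by (intro sets_PiM_I_finite) auto

lemma emeasure_cube_le:
  assumes "finite I" "0 \<le> d"
  shows "emeasure (\<Pi>\<^sub>M i\<in>I. std_normal) (cube I t d) \<le> ennreal ((2 * d) ^ card I)"
proof -
  interpret product_sigma_finite "\<lambda>_. std_normal"
    by (simp add: product_sigma_finite_def prob_space_imp_sigma_finite prob_space_normal_density)
  have "emeasure (\<Pi>\<^sub>M i\<in>I. std_normal) (cube I t d) = (\<Prod>x\<in>I. emeasure std_normal {t x - d .. t x + d})"
    unfolding cube_def using assms by (intro emeasure_PiM) auto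
  also have "\<dots> \<le> (\<Prod>x\<in>I. ennreal (2 * d))"
  proof (intro prod_mono_ennreal)
    fix x
    show "emeasure std_normal {t x - d .. t x + d} \<le> ennreal (2 * d)"
      using emeasure_std_normal_interval_le[of "t x - d" "t x + d"] assms by simp
  qed
  also have "\<dots> = ennreal ((2 * d) ^ card I)"
    using assms by (simp add: prod_ennreal ennreal_power)
  finally show ?thesis .
qed

lemma emeasure_cube_union_le:
  assumes "finite I" "finite P" "0 \<le> d"
  shows "emeasure (\<Pi>\<^sub>M i\<in>I. std_normal) (\<Union>t\<in>P. cube I t d) \<le> ennreal (real (card P) * (2 * d) ^ card I)"
proof -
  have "emeasure (\<Pi>\<^sub>M i\<in>I. std_normal) (\<Union>t\<in>P. cube I t d)
      \<le> (\<Sum>t\<in>P. emeasure (\<Pi>\<^sub>M i\<in>I. std_normal) (cube I t d))"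
    using assms by (intro emeasure_subadditive_finite) (auto intro: sets_cube)
  also have "\<dots> \<le> (\<Sum>t\<in>P. ennreal ((2 * d) ^ card I))"
    using assms by (intro sum_mono emeasure_cube_le) auto
  also have "\<dots> = ennreal (real (card P) * (2 * d) ^ card I)"
    using assms by (simp add: ennreal_of_nat_eq_real_of_nat ennreal_mult)
  finally show ?thesis .
qed

lemma count_times_volume_le:
  fixes c K x :: real
  assumes "1 \<le> k" "p < q" "0 \<le> x" "0 \<le> K" "c \<le> K * real k ^ p"
  shows "c * (x / real k) ^ q \<le> K * x ^ q / real k"
proof -
  have "real k ^ p * real k \<le> real k ^ q"
    using assms power_increasing[of "Suc p" q "real k"] by (simp add: mult.commute)
  then have "real k ^ p / real k ^ q \<le> 1 / real k"
    using assms by (simp add: divide_simps)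
  then have "K * x ^ q * (real k ^ p / real k ^ q) \<le> K * x ^ q * (1 / real k)"
    using assms by (intro mult_left_mono) auto
  moreover have "c * (x / real k) ^ q \<le> K * real k ^ p * (x / real k) ^ q"
    using assms by (intro mult_right_mono) auto
  ultimately show ?thesis by (simp add: power_divide ac_simps)
qed

lemma null_set_if_cube_covers:
  fixes S :: "('i \<Rightarrow> real) set" and K C :: real
  assumes I: "finite I" "p < card I" and C: "0 \<le> C"
    and covers: "\<And>k. 1 \<le> k \<Longrightarrow> \<exists>P. finite P \<and> real (card P) \<le> K * real k ^ p
                                     \<and> S \<subseteq> (\<Union>t\<in>P. cube I t (C / real k))"
  shows "\<exists>N \<in> null_sets (\<Pi>\<^sub>M i\<in>I. std_normal). S \<subseteq> N"
proof -
  let ?M = "\<Pi>\<^sub>M i\<in>I. std_normal"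
  interpret prob_space ?M by (rule prob_space_PiM) (simp add: prob_space_normal_density)
  obtain P where P: "\<And>k. 1 \<le> k \<Longrightarrow> finite (P k) \<and> real (card (P k)) \<le> K * real k ^ p
                                     \<and> S \<subseteq> (\<Union>t\<in>P k. cube I t (C / real k))"
    using covers by metis
  have K: "0 \<le> K" using P[of 1] of_nat_0_le_iff[of "card (P 1)"] by simp
  define N where "N = (\<Inter>k. \<Union>t\<in>P (Suc k). cube I t (C / real (Suc k)))"
  have N_sets: "N \<in> sets ?M"
    unfolding N_def using P I(1) by (intro sets.countable_INT sets.finite_UN) (auto simp: sets_cube)
  have N_small: "measure ?M N \<le> K * (2 * C) ^ card I / real k" if k: "1 \<le> k" for k
  proof -
    obtain j where j: "k = Suc j" using k not0_implies_Suc by fastforce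
    have "N \<subseteq> (\<Union>t\<in>P k. cube I t (C / real k))"
      unfolding N_def j by blast
    then have "emeasure ?M N \<le> emeasure ?M (\<Union>t\<in>P k. cube I t (C / real k))"
      using P k I by (intro emeasure_mono sets.finite_UN sets_cube) auto
    also have "\<dots> \<le> ennreal (real (card (P k)) * (2 * C / real k) ^ card I)"
      using emeasure_cube_union_le[of I "P k" "C / real k"] P k I C by simp
    also have "\<dots> \<le> ennreal (K * (2 * C) ^ card I / real k)"
      using P k I C K by (intro ennreal_leI count_times_volume_le) auto
    finally show ?thesis
      using K C by (simp add: emeasure_eq_measure ennreal_le_iff)
  qed
  have "\<exists>j. \<forall>k\<ge>j. measure ?M N \<le> K * (2 * C) ^ card I / real k"
    using N_small by (intro exI[of _ 1] allI impI)
  then have "measure ?M N \<le> 0"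
    by (rule LIMSEQ_le_const[OF lim_const_over_n])
  then have "N \<in> null_sets ?M"
    using N_sets by (simp add: emeasure_eq_measure measure_le_0_iff null_setsI)
  moreover have "S \<subseteq> (\<Union>t\<in>P (Suc k). cube I t (C / real (Suc k)))" for k
    using P[of "Suc k"] by simp
  then have "S \<subseteq> N" unfolding N_def by blast
  ultimately show ?thesis by blast
qed

lemma slice_decomposition:
  fixes T :: "nat \<times> nat \<times> nat \<Rightarrow> real"
  assumes "i < m" "j < n"
  shows "T (i, j, k) = (\<Sum>s<m * n. (if i = s div n then 1 else 0) * (if j = s mod n then 1 else 0)
                                    * T (s div n, s mod n, k))"
proof -
  have "i * n + j < Suc i * n" using assms(2) by simp
  also have "\<dots> \<le> m * n" using assms(1) by (intro mult_le_mono1) simp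
  finally have "i * n + j \<in> {..<m * n}" by simp
  moreover have "(if i = s div n then 1 else 0) * (if j = s mod n then 1 else 0) * T (s div n, s mod n, k)
      = (if s = i * n + j then T (i, j, k) else 0)" for s
    using assms(2) by auto
  ultimately show ?thesis by simp
qed

lemma tensor_rank_decomposition:
  "\<exists>a b c. \<forall>i<m. \<forall>j<n. \<forall>k<l. T (i, j, k) = (\<Sum>s<tensor_rank m n l T. a s i * b s j * c s k)"
proof -
  have "\<exists>a b c. \<forall>i<m. \<forall>j<n. \<forall>k<l. T (i, j, k) = (\<Sum>s<m * n. a s i * b s j * c s k)"
    by (intro exI[of _ "\<lambda>s i. if i = s div n then 1 else 0"] exI[of _ "\<lambda>s j. if j = s mod n then 1 else 0"]
              exI[of _ "\<lambda>s k. T (s div n, s mod n, k)"] allI impI slice_decomposition)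
  then show ?thesis
    unfolding tensor_rank_def by (rule LeastI[of "\<lambda>r. \<exists>a b c. \<forall>i<m. \<forall>j<n. \<forall>k<l.
                                    T (i, j, k) = (\<Sum>s<r. a s i * b s j * c s k)"])
qed

definition max_normalized :: "nat \<Rightarrow> (nat \<Rightarrow> real) \<Rightarrow> bool" where
  "max_normalized d u \<longleftrightarrow> (\<forall>i<d. \<bar>u i\<bar> \<le> 1) \<and> (\<exists>i<d. u i = 1)"

lemma max_normalized_multiple:
  assumes "0 < d"
  shows "\<exists>u c. max_normalized d u \<and> (\<forall>i<d. v i = c * u i)"
proof (cases "\<forall>i<d. v i = 0")
  case True
  then show ?thesis
    using assms by (intro exI[of _ "\<lambda>i. 1"] exI[of _ 0]) (auto simp: max_normalized_def)
next
  case False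
  let ?A = "(\<lambda>j. \<bar>v j\<bar>) ` {..<d}"
  have A: "finite ?A" "?A \<noteq> {}" using assms by auto
  obtain i0 where i0: "i0 < d" "\<bar>v i0\<bar> = Max ?A" using Max_in[OF A] by auto
  have max: "\<bar>v j\<bar> \<le> \<bar>v i0\<bar>" if "j < d" for j
    using Max_ge[OF A(1)] i0(2) that by simp
  have "v i0 \<noteq> 0" using False max by force
  then show ?thesis
    using i0(1) max by (intro exI[of _ "\<lambda>i. v i / v i0"] exI[of _ "v i0"])
                (auto simp: max_normalized_def abs_divide divide_le_eq_1)
qed

lemma max_normalized_decomposition:
  fixes T :: "nat \<times> nat \<times> nat \<Rightarrow> real" and a b c :: "nat \<Rightarrow> nat \<Rightarrow> real"
  assumes "0 < m" "0 < n" "r \<le> l"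
    and T: "\<forall>i<m. \<forall>j<n. \<forall>k<l. T (i, j, k) = (\<Sum>s<r. a s i * b s j * c s k)"
  shows "\<exists>a' b' c'. (\<forall>s. max_normalized m (a' s) \<and> max_normalized n (b' s))
                  \<and> (\<forall>i<m. \<forall>j<n. \<forall>k<l. T (i, j, k) = (\<Sum>s<l. a' s i * b' s j * c' s k))"
proof -
  have "\<forall>s. \<exists>u c. max_normalized m u \<and> (\<forall>i<m. a s i = c * u i)"
    using max_normalized_multiple[OF assms(1)] by blast
  then obtain a' \<sigma> where a': "\<And>s. max_normalized m (a' s) \<and> (\<forall>i<m. a s i = \<sigma> s * a' s i)"
    by metis
  have "\<forall>s. \<exists>u c. max_normalized n u \<and> (\<forall>j<n. b s j = c * u j)"
    using max_normalized_multiple[OF assms(2)] by blast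
  then obtain b' \<tau> where b': "\<And>s. max_normalized n (b' s) \<and> (\<forall>j<n. b s j = \<tau> s * b' s j)"
    by metis
  define c' where "c' = (\<lambda>s k. if s < r then \<sigma> s * \<tau> s * c s k else 0)"
  have "T (i, j, k) = (\<Sum>s<l. a' s i * b' s j * c' s k)" if ijk: "i < m" "j < n" "k < l" for i j k
  proof -
    have "(\<Sum>s<l. a' s i * b' s j * c' s k) = (\<Sum>s<r. a' s i * b' s j * c' s k)"
      using assms(3) by (intro sum.mono_neutral_right) (auto simp: c'_def)
    also have "\<dots> = (\<Sum>s<r. a s i * b s j * c s k)"
    proof (rule sum.cong[OF refl])
      fix s assume "s \<in> {..<r}"
      then show "a' s i * b' s j * c' s k = a s i * b s j * c s k"
        using a'[of s] b'[of s] ijk by (simp add: c'_def)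
    qed
    finally show ?thesis using T ijk by simp
  qed
  then show ?thesis using a' b' by blast
qed

lemma finite_abs_bounded_by_nat:
  fixes f :: "'a \<Rightarrow> real"
  assumes "finite A"
  shows "\<exists>R::nat. \<forall>x\<in>A. \<bar>f x\<bar> \<le> real R"
proof -
  obtain R :: nat where R: "(\<Sum>x\<in>A. \<bar>f x\<bar>) \<le> real R" using real_arch_simple by blast
  have "\<bar>f x\<bar> \<le> (\<Sum>x\<in>A. \<bar>f x\<bar>)" if "x \<in> A" for x
    using assms that by (intro member_le_sum) auto
  then show ?thesis using R by (meson order_trans)
qed

definition normalized_rank_sums :: "nat \<Rightarrow> nat \<Rightarrow> nat \<Rightarrow> nat \<Rightarrow> (nat \<times> nat \<times> nat \<Rightarrow> real) set" where
  "normalized_rank_sums m n l R =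
     {T \<in> ({..<m} \<times> {..<n} \<times> {..<l}) \<rightarrow>\<^sub>E UNIV. \<exists>a b c.
        (\<forall>s<l. max_normalized m (a s) \<and> max_normalized n (b s) \<and> (\<forall>k<l. \<bar>c s k\<bar> \<le> real R))
        \<and> (\<forall>i<m. \<forall>j<n. \<forall>k<l. T (i, j, k) = (\<Sum>s<l. a s i * b s j * c s k))}"

lemma rank_le_imp_normalized_rank_sums:
  assumes "0 < m" "0 < n" and T: "T \<in> ({..<m} \<times> {..<n} \<times> {..<l}) \<rightarrow>\<^sub>E UNIV"
    and rank: "tensor_rank m n l T \<le> l"
  shows "\<exists>R. T \<in> normalized_rank_sums m n l R"
proof -
  obtain a b c where "\<forall>i<m. \<forall>j<n. \<forall>k<l. T (i, j, k) = (\<Sum>s<tensor_rank m n l T. a s i * b s j * c s k)"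
    using tensor_rank_decomposition[of m n l T] by blast
  then obtain a' b' c' where norm: "\<forall>s. max_normalized m (a' s) \<and> max_normalized n (b' s)"
    and dec: "\<forall>i<m. \<forall>j<n. \<forall>k<l. T (i, j, k) = (\<Sum>s<l. a' s i * b' s j * c' s k)"
    using max_normalized_decomposition[OF assms(1,2) rank] by blast
  obtain R :: nat where "\<forall>(s, k)\<in>{..<l} \<times> {..<l}. \<bar>c' s k\<bar> \<le> real R"
    using finite_abs_bounded_by_nat[of "{..<l} \<times> {..<l}" "\<lambda>(s, k). c' s k"] by auto
  then have "\<forall>s<l. \<forall>k<l. \<bar>c' s k\<bar> \<le> real R" by auto
  with norm have "\<forall>s<l. max_normalized m (a' s) \<and> max_normalized n (b' s) \<and> (\<forall>k<l. \<bar>c' s k\<bar> \<le> real R)"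
    by blast
  then have "T \<in> normalized_rank_sums m n l R"
    unfolding normalized_rank_sums_def using T dec by blast
  then show ?thesis ..
qed

definition int_cube :: "nat \<Rightarrow> nat \<Rightarrow> (nat \<Rightarrow> int) set" where
  "int_cube d B = {..<d} \<rightarrow>\<^sub>E {- int B .. int B}"

text \<open>Pinning one coordinate to \<open>k\<close> costs a factor \<open>d\<close> instead of \<open>2k + 1\<close> in the count below;
  this is the dimension saved by the normalisation.\<close>

definition normalized_grid :: "nat \<Rightarrow> nat \<Rightarrow> (nat \<Rightarrow> int) set" where
  "normalized_grid d k = {\<alpha> \<in> int_cube d k. \<exists>i<d. \<alpha> i = int k}"

lemma finite_int_cube: "finite (int_cube d B)"
  unfolding int_cube_def by (intro finite_PiE) auto

lemma card_int_cube: "card (int_cube d B) = (2 * B + 1) ^ d"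
  unfolding int_cube_def by (simp add: card_PiE nat_add_distrib nat_mult_distrib)

lemma finite_normalized_grid: "finite (normalized_grid d k)"
  unfolding normalized_grid_def using finite_int_cube by simp

lemma card_normalized_grid_le: "card (normalized_grid d k) \<le> d * (2 * k + 1) ^ (d - 1)"
proof -
  let ?F = "\<lambda>i. (\<lambda>\<beta>. \<beta>(i := int k)) ` ({..<d} - {i} \<rightarrow>\<^sub>E {- int k .. int k})"
  have "normalized_grid d k \<subseteq> (\<Union>i<d. ?F i)"
  proof
    fix \<alpha> assume "\<alpha> \<in> normalized_grid d k"
    then obtain i where i: "i < d" "\<alpha> i = int k" and \<alpha>: "\<alpha> \<in> int_cube d k"
      unfolding normalized_grid_def by auto
    have "\<alpha> = (restrict \<alpha> ({..<d} - {i}))(i := int k)"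
      using i \<alpha> by (auto simp: fun_eq_iff int_cube_def PiE_iff extensional_def)
    moreover have "restrict \<alpha> ({..<d} - {i}) \<in> {..<d} - {i} \<rightarrow>\<^sub>E {- int k .. int k}"
      using \<alpha> by (auto simp: int_cube_def)
    ultimately show "\<alpha> \<in> (\<Union>i<d. ?F i)" using i by blast
  qed
  then have "card (normalized_grid d k) \<le> card (\<Union>i<d. ?F i)"
    by (intro card_mono) (auto intro: finite_PiE)
  also have "\<dots> \<le> (\<Sum>i<d. card (?F i))"
    by (rule card_UN_le) simp
  also have "\<dots> \<le> (\<Sum>i<d. card ({..<d} - {i} \<rightarrow>\<^sub>E {- int k .. int k}))"
    by (intro sum_mono card_image_le) (auto intro: finite_PiE)
  also have "\<dots> = (\<Sum>i<d. (2 * k + 1) ^ (d - 1))"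
    by (intro sum.cong refl) (simp add: card_PiE nat_add_distrib nat_mult_distrib)
  finally show ?thesis by simp
qed

lemma floor_scaled_approx:
  assumes "1 \<le> k"
  shows "\<bar>x - \<lfloor>real k * x\<rfloor> / real k\<bar> \<le> 1 / real k"
proof -
  have "\<bar>real k * x - \<lfloor>real k * x\<rfloor>\<bar> \<le> 1" by linarith
  then have "\<bar>(real k * x - \<lfloor>real k * x\<rfloor>) / real k\<bar> \<le> 1 / real k"
    using assms by (simp add: abs_divide divide_right_mono)
  then show ?thesis using assms by (simp add: diff_divide_distrib)
qed

lemma abs_floor_scaled_le:
  assumes "\<bar>x\<bar> \<le> real B"
  shows "\<bar>\<lfloor>real k * x\<rfloor>\<bar> \<le> int (B * k)"
proof -
  have "\<bar>real k * x\<bar> \<le> real B * real k"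
    using mult_right_mono[OF assms, of "real k"] by (simp add: abs_mult mult.commute)
  then have "- real (B * k) \<le> real k * x" "real k * x \<le> real (B * k)" by auto
  then show ?thesis by linarith
qed

lemma abs_floor_scaled_div_le:
  assumes "\<bar>x\<bar> \<le> real B" "1 \<le> k"
  shows "\<bar>\<lfloor>real k * x\<rfloor> / real k\<bar> \<le> real B"
proof -
  have "\<bar>real_of_int \<lfloor>real k * x\<rfloor>\<bar> \<le> real B * real k"
    using abs_floor_scaled_le[OF assms(1), of k] by (metis of_int_abs of_int_le_iff of_int_of_nat_eq of_nat_mult)
  then show ?thesis using assms(2) by (simp add: abs_divide divide_le_eq)
qed

definition grid_round :: "nat \<Rightarrow> nat \<Rightarrow> (nat \<Rightarrow> real) \<Rightarrow> nat \<Rightarrow> int" where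
  "grid_round d k u = (\<lambda>i\<in>{..<d}. \<lfloor>real k * u i\<rfloor>)"

lemma grid_round_int_cube:
  assumes "\<forall>i<d. \<bar>u i\<bar> \<le> real B"
  shows "grid_round d k u \<in> int_cube d (B * k)"
proof -
  have "\<lfloor>real k * u i\<rfloor> \<in> {- int (B * k) .. int (B * k)}" if "i < d" for i
    using abs_floor_scaled_le[of "u i" B k] assms that by (auto simp: abs_le_iff)
  then show ?thesis by (simp add: grid_round_def int_cube_def)
qed

lemma grid_round_normalized:
  assumes "max_normalized d u"
  shows "grid_round d k u \<in> normalized_grid d k"
proof -
  have "grid_round d k u \<in> int_cube d k"
    using grid_round_int_cube[of d u 1 k] assms by (simp add: max_normalized_def)
  moreover obtain i where "i < d" "u i = 1"
    using assms by (auto simp: max_normalized_def)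
  ultimately show ?thesis
    by (auto simp: normalized_grid_def grid_round_def intro!: exI[of _ i])
qed

lemma abs_triple_product_diff_le:
  fixes a a' b b' c c' R e :: real
  assumes "\<bar>a\<bar> \<le> 1" "\<bar>a'\<bar> \<le> 1" "\<bar>b\<bar> \<le> 1" "\<bar>b'\<bar> \<le> 1" "\<bar>c\<bar> \<le> R" "\<bar>c'\<bar> \<le> R"
    and "\<bar>a - a'\<bar> \<le> e" "\<bar>b - b'\<bar> \<le> e" "\<bar>c - c'\<bar> \<le> e"
  shows "\<bar>a * b * c - a' * b' * c'\<bar> \<le> (2 * R + 1) * e"
proof -
  have "a * b * c - a' * b' * c' = (a - a') * (b * c) + a' * ((b - b') * c) + a' * b' * (c - c')"
    by (simp add: algebra_simps)
  also have "\<bar>\<dots>\<bar> \<le> \<bar>a - a'\<bar> * (\<bar>b\<bar> * \<bar>c\<bar>) + \<bar>a'\<bar> * (\<bar>b - b'\<bar> * \<bar>c\<bar>) + \<bar>a'\<bar> * \<bar>b'\<bar> * \<bar>c - c'\<bar>"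
    by (simp add: abs_mult[symmetric] abs_triangle_ineq order_trans[OF abs_triangle_ineq add_mono])
  also have "\<dots> \<le> e * (1 * R) + 1 * (e * R) + 1 * 1 * e"
    using assms by (intro add_mono mult_mono) (auto intro: mult_mono)
  finally show ?thesis by (simp add: algebra_simps)
qed

lemma abs_sum_triple_products_diff_le:
  fixes a a' b b' c c' :: "nat \<Rightarrow> real"
  assumes "\<And>s. s < r \<Longrightarrow> \<bar>a s\<bar> \<le> 1 \<and> \<bar>a' s\<bar> \<le> 1 \<and> \<bar>b s\<bar> \<le> 1 \<and> \<bar>b' s\<bar> \<le> 1 \<and> \<bar>c s\<bar> \<le> R \<and> \<bar>c' s\<bar> \<le> R"
    and "\<And>s. s < r \<Longrightarrow> \<bar>a s - a' s\<bar> \<le> e \<and> \<bar>b s - b' s\<bar> \<le> e \<and> \<bar>c s - c' s\<bar> \<le> e"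
  shows "\<bar>(\<Sum>s<r. a s * b s * c s) - (\<Sum>s<r. a' s * b' s * c' s)\<bar> \<le> real r * ((2 * R + 1) * e)"
proof -
  have "\<bar>(\<Sum>s<r. a s * b s * c s) - (\<Sum>s<r. a' s * b' s * c' s)\<bar>
      \<le> (\<Sum>s<r. \<bar>a s * b s * c s - a' s * b' s * c' s\<bar>)"
    by (simp only: sum_subtractf[symmetric] sum_abs)
  also have "\<dots> \<le> (\<Sum>s<r. (2 * R + 1) * e)"
    using assms by (intro sum_mono abs_triple_product_diff_le) auto
  finally show ?thesis by simp
qed

definition grid_params :: "nat \<Rightarrow> nat \<Rightarrow> nat \<Rightarrow> nat \<Rightarrow> nat
    \<Rightarrow> ((nat \<Rightarrow> nat \<Rightarrow> int) \<times> (nat \<Rightarrow> nat \<Rightarrow> int) \<times> (nat \<Rightarrow> nat \<Rightarrow> int)) set" where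
  "grid_params m n l R k = ({..<l} \<rightarrow>\<^sub>E normalized_grid m k) \<times> ({..<l} \<rightarrow>\<^sub>E normalized_grid n k)
                           \<times> ({..<l} \<rightarrow>\<^sub>E int_cube l (R * k))"

definition grid_tensor :: "nat \<Rightarrow> nat \<Rightarrow> (nat \<Rightarrow> nat \<Rightarrow> int) \<times> (nat \<Rightarrow> nat \<Rightarrow> int) \<times> (nat \<Rightarrow> nat \<Rightarrow> int)
    \<Rightarrow> nat \<times> nat \<times> nat \<Rightarrow> real" where
  "grid_tensor l k = (\<lambda>(\<alpha>, \<beta>, \<gamma>) (i, j, q). \<Sum>s<l. \<alpha> s i / real k * (\<beta> s j / real k) * (\<gamma> s q / real k))"

lemma finite_grid_params: "finite (grid_params m n l R k)"
  unfolding grid_params_def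
  by (intro finite_cartesian_product finite_PiE finite_normalized_grid finite_int_cube) auto

lemma card_grid_params_le:
  assumes "1 \<le> k"
  shows "card (grid_params m n l R k)
           \<le> (m * 3 ^ (m - 1)) ^ l * (n * 3 ^ (n - 1)) ^ l * ((2 * R + 1) ^ l) ^ l
             * k ^ (((m - 1) + (n - 1) + l) * l)"
proof -
  have "card (grid_params m n l R k)
      = card (normalized_grid m k) ^ l * card (normalized_grid n k) ^ l * card (int_cube l (R * k)) ^ l"
    by (simp add: grid_params_def card_cartesian_product card_PiE)
  also have "\<dots> \<le> (m * (2 * k + 1) ^ (m - 1)) ^ l * (n * (2 * k + 1) ^ (n - 1)) ^ l
                  * ((2 * (R * k) + 1) ^ l) ^ l"
    unfolding card_int_cube by (intro mult_le_mono power_mono card_normalized_grid_le le_refl zero_le)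
  also have "\<dots> \<le> (m * (3 * k) ^ (m - 1)) ^ l * (n * (3 * k) ^ (n - 1)) ^ l * (((2 * R + 1) * k) ^ l) ^ l"
    using assms by (intro mult_le_mono power_mono le_refl) (auto simp: algebra_simps)
  also have "\<dots> = (m * 3 ^ (m - 1)) ^ l * (n * 3 ^ (n - 1)) ^ l * ((2 * R + 1) ^ l) ^ l
                  * k ^ (((m - 1) + (n - 1) + l) * l)"
    by (simp only: power_mult_distrib) (simp only: power_mult[symmetric] add_mult_distrib2 power_add ac_simps)
  finally show ?thesis .
qed

lemma normalized_rank_sums_cube_cover:
  assumes k: "1 \<le> k"
  shows "normalized_rank_sums m n l R
           \<subseteq> (\<Union>p\<in>grid_params m n l R k.
                 cube ({..<m} \<times> {..<n} \<times> {..<l}) (grid_tensor l k p) (real l * (2 * real R + 1) / real k))"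
    (is "_ \<subseteq> (\<Union>p\<in>_. cube ?I _ ?d)")
proof
  fix T assume "T \<in> normalized_rank_sums m n l R"
  then obtain a b c where T: "T \<in> ?I \<rightarrow>\<^sub>E UNIV"
    and norm: "\<forall>s<l. max_normalized m (a s) \<and> max_normalized n (b s) \<and> (\<forall>q<l. \<bar>c s q\<bar> \<le> real R)"
    and dec: "\<forall>i<m. \<forall>j<n. \<forall>q<l. T (i, j, q) = (\<Sum>s<l. a s i * b s j * c s q)"
    unfolding normalized_rank_sums_def by blast
  define p where "p = (\<lambda>s\<in>{..<l}. grid_round m k (a s), \<lambda>s\<in>{..<l}. grid_round n k (b s),
                       \<lambda>s\<in>{..<l}. grid_round l k (c s))"
  have "p \<in> grid_params m n l R k"
    using norm unfolding p_def grid_params_def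
    by (auto intro: grid_round_normalized grid_round_int_cube)
  moreover have "\<bar>T (i, j, q) - grid_tensor l k p (i, j, q)\<bar> \<le> ?d"
    if ijq: "i < m" "j < n" "q < l" for i j q
  proof -
    let ?rd = "\<lambda>x. \<lfloor>real k * x\<rfloor> / real k"
    have "grid_tensor l k p (i, j, q) = (\<Sum>s<l. ?rd (a s i) * ?rd (b s j) * ?rd (c s q))"
      using ijq by (simp add: grid_tensor_def p_def grid_round_def)
    moreover have "\<bar>(\<Sum>s<l. a s i * b s j * c s q) - (\<Sum>s<l. ?rd (a s i) * ?rd (b s j) * ?rd (c s q))\<bar>
                   \<le> real l * ((2 * real R + 1) * (1 / real k))"
    proof (rule abs_sum_triple_products_diff_le)
      fix s assume "s < l"
      then have "\<bar>a s i\<bar> \<le> real 1" "\<bar>b s j\<bar> \<le> real 1" "\<bar>c s q\<bar> \<le> real R"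
        using norm ijq by (auto simp: max_normalized_def)
      then show "\<bar>a s i\<bar> \<le> 1 \<and> \<bar>?rd (a s i)\<bar> \<le> 1 \<and> \<bar>b s j\<bar> \<le> 1 \<and> \<bar>?rd (b s j)\<bar> \<le> 1
                 \<and> \<bar>c s q\<bar> \<le> real R \<and> \<bar>?rd (c s q)\<bar> \<le> real R"
        using abs_floor_scaled_div_le k by fastforce
      show "\<bar>a s i - ?rd (a s i)\<bar> \<le> 1 / real k \<and> \<bar>b s j - ?rd (b s j)\<bar> \<le> 1 / real k
            \<and> \<bar>c s q - ?rd (c s q)\<bar> \<le> 1 / real k"
        using floor_scaled_approx[OF k] by blast
    qed
    ultimately show ?thesis using dec ijq by simp
  qed
  then have "T \<in> cube ?I (grid_tensor l k p) ?d"
    using T by (force simp: cube_def PiE_iff abs_le_iff)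
  ultimately show "T \<in> (\<Union>p\<in>grid_params m n l R k. cube ?I (grid_tensor l k p) ?d)"
    by blast
qed

lemma normalized_rank_sums_null:
  assumes "((m - 1) + (n - 1) + l) * l < m * n * l"
  shows "\<exists>N \<in> null_sets (gaussian_tensor_measure m n l). normalized_rank_sums m n l R \<subseteq> N"
proof -
  let ?I = "{..<m} \<times> {..<n} \<times> {..<l}"
  let ?p = "((m - 1) + (n - 1) + l) * l"
  define K :: nat where "K = (m * 3 ^ (m - 1)) ^ l * (n * 3 ^ (n - 1)) ^ l * ((2 * R + 1) ^ l) ^ l"
  have "\<exists>P. finite P \<and> real (card P) \<le> real K * real k ^ ?p
           \<and> normalized_rank_sums m n l R \<subseteq> (\<Union>t\<in>P. cube ?I t (real l * (2 * real R + 1) / real k))"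
    if k: "1 \<le> k" for k
  proof (intro exI conjI)
    let ?P = "grid_tensor l k ` grid_params m n l R k"
    show "finite ?P" by (intro finite_imageI finite_grid_params)
    have "card ?P \<le> K * k ^ ?p"
      using card_image_le[OF finite_grid_params] card_grid_params_le[OF k] unfolding K_def
      by (rule le_trans)
    then show "real (card ?P) \<le> real K * real k ^ ?p"
      by (simp only: of_nat_mult[symmetric] of_nat_power[symmetric] of_nat_le_iff)
    show "normalized_rank_sums m n l R \<subseteq> (\<Union>t\<in>?P. cube ?I t (real l * (2 * real R + 1) / real k))"
      using normalized_rank_sums_cube_cover[OF k] by (simp only: image_image)
  qed
  moreover have "?p < card ?I" using assms by (simp add: card_cartesian_product)
  ultimately show ?thesis
    unfolding gaussian_tensor_measure_def
    by (intro null_set_if_cube_covers[where K = "real K" and C = "real l * (2 * real R + 1)"]) auto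
qed

lemma AE_tensor_rank_gt:
  assumes "0 < l" and dim: "(m - 1) + (n - 1) + l < m * n"
  shows "AE T in gaussian_tensor_measure m n l. l < tensor_rank m n l T"
proof -
  let ?M = "gaussian_tensor_measure m n l"
  have mn: "0 < m" "0 < n" using dim by (auto intro!: gr0I)
  have "((m - 1) + (n - 1) + l) * l < m * n * l" using assms by simp
  then have "\<forall>R. \<exists>N \<in> null_sets ?M. normalized_rank_sums m n l R \<subseteq> N"
    using normalized_rank_sums_null by blast
  then obtain N where N: "\<And>R. N R \<in> null_sets ?M" "\<And>R. normalized_rank_sums m n l R \<subseteq> N R"
    by metis
  have "{T \<in> space ?M. \<not> l < tensor_rank m n l T} \<subseteq> (\<Union>R. N R)"
  proof
    fix T assume "T \<in> {T \<in> space ?M. \<not> l < tensor_rank m n l T}"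
    then have "T \<in> ({..<m} \<times> {..<n} \<times> {..<l}) \<rightarrow>\<^sub>E UNIV" "tensor_rank m n l T \<le> l"
      by (auto simp: gaussian_tensor_measure_def space_PiM)
    then obtain R where "T \<in> normalized_rank_sums m n l R"
      using rank_le_imp_normalized_rank_sums[OF mn] by blast
    then show "T \<in> (\<Union>R. N R)" using N(2) by blast
  qed
  with null_sets_UN[OF N(1)] show ?thesis by (rule AE_I')
qed

theorem mainTheorem10:
  fixes m n l r :: nat
  assumes "2 \<le> m" and "m \<le> n" and "n \<le> l" and "l < (m - 1) * (n - 1) + 1"
    and "typical_rank m n l r"
  shows "r \<ge> l + 1"
proof (rule ccontr)
  assume "\<not> r \<ge> l + 1"
  let ?M = "gaussian_tensor_measure m n l"
  have "0 < l" using assms(1-3) by simp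
  moreover obtain a b where "m = Suc a" "n = Suc b"
    using assms(1,2) by (metis Suc_le_D le_trans numeral_2_eq_2)
  then have "(m - 1) + (n - 1) + l < m * n" using assms(4) by simp
  ultimately have "AE T in ?M. l < tensor_rank m n l T"
    by (rule AE_tensor_rank_gt)
  then have "AE T in ?M. tensor_rank m n l T \<noteq> r"
    by (rule eventually_mono) (use \<open>\<not> r \<ge> l + 1\<close> in auto)
  then have "emeasure ?M {T \<in> space ?M. tensor_rank m n l T = r} = 0"
    by (rule emeasure_eq_0_AE)
  then have "measure ?M {T \<in> space ?M. tensor_rank m n l T = r} = 0"
    by (simp add: measure_def)
  with assms(5) show False by (simp add: typical_rank_def)
qed

end
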